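(* For every outcome of the random choices of Algorithm 1 and every $k\in\{0,\dots,T-1\}$, $f_\mu(x_{k+1})\le f_\mu(x_k)$; moreover for every $k\in\{0,\dots,T\}$, $f_\mu(x_k)\le 0$, $Ax_k\le(1+\epsilon)\mathbf 1$ and $\mathbf 1^Tx_k\le(1+\epsilon)\mathrm{OPT}$.
   Context: Standing setup: $A\in\mathbb{R}^{m\times n}_{\ge 0}$ has no zero column and is normalized so that $\min_{i\in[n]}\|A_{:i}\|_\infty=1$, where $A_{:i}$ denotes the $i$-th column. The packing LP is $\max\{\mathbf 1^Tx: x\ge 0,\ Ax\le \mathbf 1\}$ with optimal value $\mathrm{OPT}$. $\epsilon\in(0,1/2]$. $\log$ is the natural logarithm unless written $\log_2$. $\mu=\frac{\epsilon}{4\log(nm/\epsilon)}$, $p_j(x)=\exp\big(\frac{1}{\mu}((Ax)_j-1)\big)$, and $f_\mu(x)=-\mathbf 1^Tx+\mu\sum_{j=1}^m p_j(x)$; $\nabla_i f_\mu(x)=-1+\sum_j A_{ji}p_j(x)$. Algorithm 1 (with any number $T$ of iterations): set $\alpha=\mu/20$, $w=\lceil\log_2(1/\epsilon)\rceil$, $x_0[i]=\frac{1-\epsilon/2}{n\|A_{:i}\|_\infty}$. For $k=0,\dots,T-1$: choose $t_k\in\{0,\dots,w-1\}$ uniformly at random; writing $g_i=\nabla_i f_\mu(x_k)$, define $\xi_k[i]=0$ if $|g_i|\le\epsilon$, $\xi_k[i]=g_i$ if $\epsilon<|g_i|\le 1$, $\xi_k[i]=1$ if $g_i>1$; $\xi^{(t)}_k[i]=\xi_k[i]$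 if $\epsilon2^t<|\xi_k[i]|\le\epsilon2^{t+1}$ and $0$ otherwise; $x_{k+1}[i]=x_k[i]\exp(-\alpha\,\xi^{(t_k)}_k[i])$. *)

theory Defs
  imports Complex_Main
begin

text \<open>Matrices A are represented as functions nat => nat => real with
  row index j < m and column index i < n; vectors x as nat => real with index i < n.\<close>

definition Ax :: "(nat \<Rightarrow> nat \<Rightarrow> real) \<Rightarrow> nat \<Rightarrow> (nat \<Rightarrow> real) \<Rightarrow> nat \<Rightarrow> real" where
  "Ax A n x j = (\<Sum>i<n. A j i * x i)"

definition colnorm :: "(nat \<Rightarrow> nat \<Rightarrow> real) \<Rightarrow> nat \<Rightarrow> nat \<Rightarrow> real" where
  "colnorm A m i = Max {\<bar>A j i\<bar> | j. j < m}"

definition feasible :: "(nat \<Rightarrow> nat \<Rightarrow> real) \<Rightarrow> nat \<Rightarrow> nat \<Rightarrow> (nat \<Rightarrow> real) \<Rightarrow> bool" where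
  "feasible A m n x \<longleftrightarrow> (\<forall>i<n. 0 \<le> x i) \<and> (\<forall>j<m. Ax A n x j \<le> 1)"

definition OPT :: "(nat \<Rightarrow> nat \<Rightarrow> real) \<Rightarrow> nat \<Rightarrow> nat \<Rightarrow> real" where
  "OPT A m n = Sup {(\<Sum>i<n. x i) | x. feasible A m n x}"

definition mu :: "nat \<Rightarrow> nat \<Rightarrow> real \<Rightarrow> real" where
  "mu m n eps = eps / (4 * ln (real n * real m / eps))"

definition pj :: "(nat \<Rightarrow> nat \<Rightarrow> real) \<Rightarrow> nat \<Rightarrow> nat \<Rightarrow> real \<Rightarrow> (nat \<Rightarrow> real) \<Rightarrow> nat \<Rightarrow> real" where
  "pj A m n eps x j = exp ((1 / mu m n eps) * (Ax A n x j - 1))"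

definition fmu :: "(nat \<Rightarrow> nat \<Rightarrow> real) \<Rightarrow> nat \<Rightarrow> nat \<Rightarrow> real \<Rightarrow> (nat \<Rightarrow> real) \<Rightarrow> real" where
  "fmu A m n eps x = - (\<Sum>i<n. x i) + mu m n eps * (\<Sum>j<m. pj A m n eps x j)"

definition gradf :: "(nat \<Rightarrow> nat \<Rightarrow> real) \<Rightarrow> nat \<Rightarrow> nat \<Rightarrow> real \<Rightarrow> (nat \<Rightarrow> real) \<Rightarrow> nat \<Rightarrow> real" where
  "gradf A m n eps x i = -1 + (\<Sum>j<m. A j i * pj A m n eps x j)"

definition alpha :: "nat \<Rightarrow> nat \<Rightarrow> real \<Rightarrow> real" where
  "alpha m n eps = mu m n eps / 20"

definition wbuckets :: "real \<Rightarrow> nat" where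
  "wbuckets eps = nat \<lceil>log 2 (1 / eps)\<rceil>"

definition xi :: "(nat \<Rightarrow> nat \<Rightarrow> real) \<Rightarrow> nat \<Rightarrow> nat \<Rightarrow> real \<Rightarrow> (nat \<Rightarrow> real) \<Rightarrow> nat \<Rightarrow> real" where
  "xi A m n eps x i = (let g = gradf A m n eps x i in
     if \<bar>g\<bar> \<le> eps then 0 else if \<bar>g\<bar> \<le> 1 then g else if g > 1 then 1 else g)"
text \<open>(the case g < -1 cannot occur since g >= -1; we keep g there)\<close>

definition xi_t :: "(nat \<Rightarrow> nat \<Rightarrow> real) \<Rightarrow> nat \<Rightarrow> nat \<Rightarrow> real \<Rightarrow> nat \<Rightarrow> (nat \<Rightarrow> real) \<Rightarrow> nat \<Rightarrow> real" where
  "xi_t A m n eps t x i = (let v = xi A m n eps x i in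
     if eps * 2 ^ t < \<bar>v\<bar> \<and> \<bar>v\<bar> \<le> eps * 2 ^ (t + 1) then v else 0)"

definition x_init :: "(nat \<Rightarrow> nat \<Rightarrow> real) \<Rightarrow> nat \<Rightarrow> nat \<Rightarrow> real \<Rightarrow> nat \<Rightarrow> real" where
  "x_init A m n eps i = (1 - eps / 2) / (real n * colnorm A m i)"

text \<open>iterates x_k of Algorithm 1 for a given outcome ts of the random choices t_0, t_1, ...\<close>
primrec alg_iter :: "(nat \<Rightarrow> nat \<Rightarrow> real) \<Rightarrow> nat \<Rightarrow> nat \<Rightarrow> real \<Rightarrow> (nat \<Rightarrow> nat) \<Rightarrow> nat \<Rightarrow> nat \<Rightarrow> real" where
  "alg_iter A m n eps ts 0 = x_init A m n eps"
| "alg_iter A m n eps ts (Suc k) =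
     (let x = alg_iter A m n eps ts k in
      (\<lambda>i. x i * exp (- alpha m n eps * xi_t A m n eps (ts k) x i)))"

end

theory Submission
  imports Defs
begin

text \<open>
  Write \<open>B = \<epsilon> 2\<^sup>t\<close> for the current bucket. A coordinate only moves if its truncated
  gradient lies in \<open>(B, 2B]\<close>; then the multiplicative update moves \<open>x\<close> against the gradient
  and changes every row of \<open>Ax\<close> by at most \<open>B\<mu>/4\<close>. Since \<open>exp z \<le> 1 + z + z\<^sup>2\<close> for \<open>z \<le> 1\<close>,
  \<open>f\<^sub>\<mu>\<close> then increases by at most its first-order change plus \<open>B/4\<close> times the
  \<open>(\<nabla>f\<^sub>\<mu> + 1)\<close>-weighted step, and the first-order gain \<open>|\<nabla>\<^sub>i f\<^sub>\<mu>|\<close> of every moving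
  coordinate dominates this loss. So \<open>f\<^sub>\<mu>\<close> never increases from \<open>f\<^sub>\<mu>(x\<^sub>0) \<le> 0\<close>.
  If a row satisfied \<open>(Ax)\<^sub>j = M > 1 + \<epsilon>\<close>, the barrier term \<open>\<mu> exp((M - 1)/\<mu>)\<close> alone
  would exceed \<open>n M \<ge> \<one>\<^sup>Tx\<close>, because \<open>\<epsilon>/\<mu> = 4 log(nm/\<epsilon>)\<close>; hence \<open>f\<^sub>\<mu> \<le> 0\<close> forces
  \<open>Ax \<le> (1 + \<epsilon>)\<one>\<close>, and \<open>x/(1 + \<epsilon>)\<close> is feasible.
\<close>

lemma exp_le_one_plus_plus_square:
  fixes z :: real
  assumes "z \<le> 1"
  shows "exp z \<le> 1 + z + z\<^sup>2"
proof (cases "0 \<le> z")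
  case True
  then show ?thesis using exp_bound assms by blast
next
  case False
  have "exp z * (1 - z) \<le> exp z * exp (- z)"
    using exp_ge_add_one_self[of "- z"] by (intro mult_left_mono) auto
  also have "\<dots> = 1" by (simp flip: exp_add)
  also have "1 \<le> (1 + z + z\<^sup>2) * (1 - z)"
  proof -
    have "z * (z * z) \<le> 0" using False by (intro mult_nonpos_nonneg) auto
    then show ?thesis by (simp add: algebra_simps power2_eq_square)
  qed
  finally show ?thesis
    using False by (simp add: mult_le_cancel_right)
qed

lemma abs_exp_minus_one_le:
  fixes w r :: real
  assumes "\<bar>w\<bar> \<le> r"
  shows "\<bar>exp w - 1\<bar> \<le> exp r - 1"
proof (cases "0 \<le> w")
  case True
  with assms show ?thesis by simp
next
  case False
  have "1 - exp w \<le> - w" using exp_ge_add_one_self[of w] by linarith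
  also have "\<dots> \<le> r" using assms by linarith
  also have "r \<le> exp r - 1" using exp_ge_add_one_self[of r] by linarith
  finally show ?thesis using False by simp
qed

lemma Ax_nonneg:
  assumes "\<forall>i<n. 0 \<le> A j i" "\<forall>i<n. 0 \<le> x i"
  shows "0 \<le> Ax A n x j"
  unfolding Ax_def using assms by (intro sum_nonneg) auto

lemma Ax_mono:
  assumes "\<forall>i<n. 0 \<le> A j i" "\<forall>i<n. x i \<le> y i"
  shows "Ax A n x j \<le> Ax A n y j"
  unfolding Ax_def using assms by (intro sum_mono mult_left_mono) auto

lemma Ax_scale: "Ax A n (\<lambda>i. c * x i) j = c * Ax A n x j"
  by (simp add: Ax_def sum_distrib_left mult_ac)

lemma Ax_diff: "Ax A n y j - Ax A n x j = Ax A n (\<lambda>i. y i - x i) j"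
  by (simp add: Ax_def sum_subtractf right_diff_distrib)

lemma abs_Ax_le:
  assumes "\<forall>i<n. 0 \<le> A j i"
  shows "\<bar>Ax A n d j\<bar> \<le> Ax A n (\<lambda>i. \<bar>d i\<bar>) j"
proof -
  have "\<bar>Ax A n d j\<bar> \<le> (\<Sum>i<n. \<bar>A j i * d i\<bar>)"
    unfolding Ax_def by (rule sum_abs)
  also have "\<dots> = Ax A n (\<lambda>i. \<bar>d i\<bar>) j"
    unfolding Ax_def using assms by (intro sum.cong) (auto simp: abs_mult)
  finally show ?thesis .
qed

lemma le_Ax_of_entry_ge_one:
  assumes "\<forall>i<n. 0 \<le> A j i" "\<forall>i<n. 0 \<le> x i" "i < n" "1 \<le> A j i"
  shows "x i \<le> Ax A n x j"
proof -
  have "x i \<le> A j i * x i"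
    using assms by (metis mult_right_mono mult_1)
  also have "\<dots> \<le> Ax A n x j"
    unfolding Ax_def using assms
    by (intro member_le_sum[of i "{..<n}" "\<lambda>i. A j i * x i"]) auto
  finally show ?thesis .
qed

lemma abs_le_colnorm:
  assumes "j < m"
  shows "\<bar>A j i\<bar> \<le> colnorm A m i"
proof -
  have "{\<bar>A j i\<bar> | j. j < m} = (\<lambda>j. \<bar>A j i\<bar>) ` {..<m}" by auto
  then show ?thesis unfolding colnorm_def using assms by (intro Max_ge) auto
qed

lemma colnorm_attained:
  assumes "0 < m"
  obtains j where "j < m" "colnorm A m i = \<bar>A j i\<bar>"
proof -
  have eq: "{\<bar>A j i\<bar> | j. j < m} = (\<lambda>j. \<bar>A j i\<bar>) ` {..<m}" by auto
  have "colnorm A m i \<in> (\<lambda>j. \<bar>A j i\<bar>) ` {..<m}"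
    unfolding colnorm_def eq using assms by (intro Max_in) (auto simp: lessThan_empty_iff)
  then show ?thesis using that by auto
qed

lemma entry_ge_one_of_colnorm:
  assumes "\<forall>j<m. 0 \<le> A j i" "0 < m" "1 \<le> colnorm A m i"
  shows "\<exists>j<m. 1 \<le> A j i"
proof -
  obtain j where "j < m" "colnorm A m i = \<bar>A j i\<bar>" using colnorm_attained[OF assms(2)] .
  then show ?thesis using assms by auto
qed

lemma Min_colnorm_eq_oneD:
  assumes "1 \<le> n" "Min {colnorm A m i | i. i < n} = 1"
  shows "\<forall>i<n. 1 \<le> colnorm A m i" and "\<exists>i<n. colnorm A m i = 1"
proof -
  have eq: "{colnorm A m i | i. i < n} = colnorm A m ` {..<n}" by auto
  have "finite {colnorm A m i | i. i < n}" "{colnorm A m i | i. i < n} \<noteq> {}"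
    using assms(1) unfolding eq by (auto simp: lessThan_empty_iff)
  from Min_le[OF this(1)] Min_in[OF this] assms(2)
  show "\<forall>i<n. 1 \<le> colnorm A m i" "\<exists>i<n. colnorm A m i = 1" by auto
qed

lemma packing_ratio_bounds:
  assumes "1 \<le> n" "1 \<le> m" "0 < eps" "eps \<le> 1/2"
  shows "2 * (real n * real m) \<le> real n * real m / eps"
    and "2 \<le> real n * real m / eps" "real n \<le> real n * real m / eps"
proof -
  have n: "1 \<le> real n" and m: "1 \<le> real m" using assms by auto
  have "real n * 1 \<le> real n * real m" using n m by (intro mult_left_mono) auto
  then have nm: "1 \<le> real n * real m" "real n \<le> real n * real m" using n by linarith+
  have "2 \<le> 1 / eps" using assms by (simp add: field_simps)
  then have "2 * (real n * real m) \<le> 1 / eps * (real n * real m)"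
    using nm by (intro mult_right_mono) auto
  then show "2 * (real n * real m) \<le> real n * real m / eps" by simp
  with nm show "2 \<le> real n * real m / eps" "real n \<le> real n * real m / eps" by linarith+
qed

lemma eps_div_mu:
  assumes "1 \<le> n" "1 \<le> m" "0 < eps" "eps \<le> 1/2"
  shows "eps / mu m n eps = 4 * ln (real n * real m / eps)"
    and "0 < mu m n eps"
proof -
  have "0 < ln (real n * real m / eps)"
    using packing_ratio_bounds(2,3)[OF assms] by simp
  then show "eps / mu m n eps = 4 * ln (real n * real m / eps)" "0 < mu m n eps"
    using assms by (simp_all add: mu_def)
qed

lemma mu_le_quarter:
  assumes "1 \<le> n" "1 \<le> m" "0 < eps" "eps \<le> 1/2"
  shows "mu m n eps \<le> 1/4"
proof -
  define y where "y = real n * real m / eps"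
  have y: "2 \<le> y" using packing_ratio_bounds(2,3)[OF assms] by (simp add: y_def)
  have "exp (1/2 :: real) \<le> 1 + 1/2 + (1/2)\<^sup>2" by (rule exp_bound) auto
  also have "\<dots> \<le> y" using y by (simp add: power2_eq_square)
  finally have "1/2 \<le> ln y" using y by (subst ln_ge_iff) auto
  then have "eps / (4 * ln y) \<le> (1/2) / (4 * (1/2))" using assms by (intro frac_le) auto
  then show ?thesis by (simp add: mu_def y_def)
qed

lemma exp_scaled_eps_div_mu:
  assumes "1 \<le> n" "1 \<le> m" "0 < eps" "eps \<le> 1/2"
  shows "exp (c * (eps / mu m n eps)) = (real n * real m / eps) powr (4 * c)"
  using packing_ratio_bounds(2,3)[OF assms] assms by (simp add: eps_div_mu[OF assms] powr_def mult_ac)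

section \<open>The potential and its gradient\<close>

lemma pj_pos: "0 < pj A m n eps x j"
  by (simp add: pj_def)

lemma pj_eq_mult_exp:
  "pj A m n eps y j = pj A m n eps x j * exp ((Ax A n y j - Ax A n x j) / mu m n eps)"
  by (simp add: pj_def flip: exp_add) (simp add: diff_divide_distrib)

lemma gradf_ge_minus_one:
  assumes "\<forall>j<m. 0 \<le> A j i"
  shows "-1 \<le> gradf A m n eps x i"
proof -
  have "0 \<le> (\<Sum>j<m. A j i * pj A m n eps x j)"
    using assms by (intro sum_nonneg) (simp add: less_imp_le[OF pj_pos])
  then show ?thesis by (simp add: gradf_def)
qed

lemma sum_pj_mult_Ax:
  "(\<Sum>j<m. pj A m n eps x j * Ax A n d j) = (\<Sum>i<n. d i * (gradf A m n eps x i + 1))"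
proof -
  have "(\<Sum>j<m. pj A m n eps x j * Ax A n d j) = (\<Sum>j<m. \<Sum>i<n. d i * (A j i * pj A m n eps x j))"
    by (simp add: Ax_def sum_distrib_left mult_ac)
  also have "\<dots> = (\<Sum>i<n. \<Sum>j<m. d i * (A j i * pj A m n eps x j))"
    by (rule sum.swap)
  also have "\<dots> = (\<Sum>i<n. d i * (gradf A m n eps x i + 1))"
    by (simp add: gradf_def sum_distrib_left)
  finally show ?thesis .
qed

lemma fmu_cong:
  assumes "\<forall>i<n. y i = x i"
  shows "fmu A m n eps y = fmu A m n eps x"
  using assms by (simp add: fmu_def pj_def Ax_def)

lemma fmu_le_linearization:
  fixes A :: "nat \<Rightarrow> nat \<Rightarrow> real" and C :: real
  assumes nonneg: "\<forall>j<m. \<forall>i<n. 0 \<le> A j i"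
    and mu: "0 < mu m n eps" and C: "0 \<le> C" "C \<le> 1"
    and step: "\<forall>j<m. Ax A n (\<lambda>i. \<bar>y i - x i\<bar>) j \<le> C * mu m n eps"
  shows "fmu A m n eps y \<le> fmu A m n eps x
    + (\<Sum>i<n. gradf A m n eps x i * (y i - x i) + C * \<bar>y i - x i\<bar> * (gradf A m n eps x i + 1))"
proof -
  define u where "u = mu m n eps"
  define p where "p = pj A m n eps x"
  define g where "g = gradf A m n eps x"
  define d where "d = (\<lambda>i. y i - x i)"
  define D where "D = Ax A n d"
  define E where "E = Ax A n (\<lambda>i. \<bar>d i\<bar>)"
  have row: "u * pj A m n eps y j \<le> u * p j + p j * D j + C * (p j * E j)" if j: "j < m" for j
  proof -
    have DE: "\<bar>D j\<bar> \<le> E j"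
      unfolding D_def E_def using nonneg j by (intro abs_Ax_le) auto
    have "\<bar>D j\<bar> \<le> C * u"
      using DE step j by (auto simp: u_def E_def d_def)
    then have small: "\<bar>D j / u\<bar> \<le> C"
      using mu by (simp add: u_def abs_divide pos_divide_le_eq)
    have "(D j / u)\<^sup>2 = \<bar>D j / u\<bar> * \<bar>D j / u\<bar>" by (simp add: power2_eq_square)
    also have "\<dots> \<le> C * \<bar>D j / u\<bar>" using small by (intro mult_right_mono) auto
    also have "\<dots> \<le> C * (E j / u)"
      using DE mu C by (intro mult_left_mono) (auto simp: u_def abs_divide divide_right_mono)
    finally have "exp (D j / u) \<le> 1 + D j / u + C * (E j / u)"
      using exp_le_one_plus_plus_square[of "D j / u"] small C by linarith
    then have "u * p j * exp (D j / u) \<le> u * p j * (1 + D j / u + C * (E j / u))"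
      using mu pj_pos by (intro mult_left_mono) (auto simp: u_def p_def less_imp_le)
    also have "\<dots> = u * p j + p j * D j + C * (p j * E j)"
      using mu by (simp add: u_def field_simps)
    finally show ?thesis
      by (simp add: pj_eq_mult_exp[of _ _ _ _ y j x] Ax_diff D_def d_def p_def u_def mult_ac)
  qed
  have "u * (\<Sum>j<m. pj A m n eps y j) \<le> (\<Sum>j<m. u * p j + p j * D j + C * (p j * E j))"
    unfolding sum_distrib_left using row by (intro sum_mono) auto
  also have "\<dots> = u * (\<Sum>j<m. p j) + (\<Sum>i<n. d i * (g i + 1)) + C * (\<Sum>i<n. \<bar>d i\<bar> * (g i + 1))"
    by (simp add: sum.distrib sum_distrib_left sum_pj_mult_Ax D_def E_def p_def g_def
        flip: sum_distrib_left)
  finally have "u * (\<Sum>j<m. pj A m n eps y j)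
      \<le> u * (\<Sum>j<m. p j) + (\<Sum>i<n. d i * (g i + 1)) + C * (\<Sum>i<n. \<bar>d i\<bar> * (g i + 1))" .
  moreover have "(\<Sum>i<n. y i) = (\<Sum>i<n. x i) + (\<Sum>i<n. d i)"
    by (simp add: d_def flip: sum.distrib)
  moreover have "(\<Sum>i<n. g i * d i + C * \<bar>d i\<bar> * (g i + 1))
      = (\<Sum>i<n. d i * (g i + 1)) - (\<Sum>i<n. d i) + C * (\<Sum>i<n. \<bar>d i\<bar> * (g i + 1))"
    by (simp add: sum_distrib_left algebra_simps sum.distrib sum_subtractf)
  ultimately show ?thesis
    by (simp add: fmu_def u_def p_def g_def d_def)
qed

section \<open>One step of the algorithm\<close>

lemma xi_t_cases:
  fixes t :: nat
  assumes "-1 \<le> gradf A m n eps x i"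
  defines "g \<equiv> gradf A m n eps x i" and "s \<equiv> xi_t A m n eps t x i"
  shows "s = 0 \<or> (eps * 2 ^ t < \<bar>s\<bar> \<and> \<bar>s\<bar> \<le> 2 * (eps * 2 ^ t) \<and> \<bar>s\<bar> \<le> 1
    \<and> 0 < s * g \<and> eps * 2 ^ t * (g + 1) \<le> 4 * \<bar>g\<bar>)"
proof -
  define B where "B = eps * 2 ^ t"
  have "s = 0 \<or> (B < \<bar>s\<bar> \<and> \<bar>s\<bar> \<le> 2 * B \<and> (1 < g \<and> s = 1 \<or> \<bar>g\<bar> \<le> 1 \<and> s = g))"
    using assms(1) unfolding g_def s_def B_def xi_t_def xi_def Let_def
    by (auto split: if_splits simp: mult_ac)
  moreover have "B * (g + 1) \<le> 4 * \<bar>g\<bar>" if "B < \<bar>s\<bar>" "1 < g \<and> s = 1 \<or> \<bar>g\<bar> \<le> 1 \<and> s = g"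
    using that(2)
  proof
    assume "1 < g \<and> s = 1"
    then have "B * (g + 1) \<le> 1 * (g + 1)" using that(1) by (intro mult_right_mono) auto
    also have "\<dots> \<le> 4 * \<bar>g\<bar>" using \<open>1 < g \<and> s = 1\<close> by simp
    finally show ?thesis .
  next
    assume g: "\<bar>g\<bar> \<le> 1 \<and> s = g"
    have "0 \<le> g + 1" using assms(1) by (simp add: g_def)
    show ?thesis
    proof (cases "0 \<le> B")
      case True
      then have "B * (g + 1) \<le> B * 2" using g by (intro mult_left_mono) auto
      then show ?thesis using g that(1) by linarith
    next
      case False
      then have "B * (g + 1) \<le> 0" using \<open>0 \<le> g + 1\<close> by (simp add: mult_nonpos_nonneg)
      then show ?thesis by linarith
    qed
  qed
  ultimately show ?thesis
    by (auto simp: B_def zero_less_mult_iff)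
qed

lemma coordinate_descent_term_nonpos:
  fixes g s x a C :: real
  assumes "0 \<le> x" "0 < a" "s = 0 \<or> (0 < s * g \<and> C * (g + 1) \<le> \<bar>g\<bar>)"
  defines "d \<equiv> x * exp (- a * s) - x"
  shows "g * d + C * \<bar>d\<bar> * (g + 1) \<le> 0"
proof (cases "s = 0")
  case True
  then show ?thesis by (simp add: d_def)
next
  case False
  with assms(3) have sg: "0 < s * g" and C: "C * (g + 1) \<le> \<bar>g\<bar>" by auto
  have "g * d \<le> 0"
  proof (cases "0 < s")
    case True
    with sg have "0 < g" by (simp add: zero_less_mult_iff)
    moreover have "d \<le> 0" using True assms(1,2) by (simp add: d_def mult_left_le)
    ultimately show ?thesis by (simp add: mult_nonneg_nonpos)
  next
    case False
    with sg have "g < 0" "s < 0" by (auto simp: zero_less_mult_iff)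
    moreover from \<open>s < 0\<close> have "1 \<le> exp (- a * s)"
      using assms(2) by (simp add: mult_pos_neg less_imp_le)
    then have "x * 1 \<le> x * exp (- a * s)" using assms(1) by (rule mult_left_mono)
    then have "0 \<le> d" by (simp add: d_def)
    ultimately show ?thesis by (simp add: mult_nonpos_nonneg)
  qed
  then have "g * d + C * \<bar>d\<bar> * (g + 1) = \<bar>d\<bar> * (C * (g + 1) - \<bar>g\<bar>)"
    by (simp add: abs_mult_pos abs_of_nonpos algebra_simps flip: abs_mult)
  also have "\<dots> \<le> 0" using C by (simp add: mult_nonneg_nonpos)
  finally show ?thesis .
qed

lemma Ax_abs_multiplicative_step_le:
  fixes u B :: real and s :: "nat \<Rightarrow> real"
  assumes nonneg: "\<forall>j<m. \<forall>i<n. 0 \<le> A j i" and xnn: "\<forall>i<n. 0 \<le> x i"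
    and Axb: "\<forall>j<m. Ax A n x j \<le> 3/2"
    and u: "0 \<le> u" "u \<le> 1/4" and B: "0 \<le> B" "B \<le> 1"
    and s: "\<forall>i<n. \<bar>s i\<bar> \<le> 2 * B"
  shows "\<forall>j<m. Ax A n (\<lambda>i. \<bar>x i * exp (- (u / 20) * s i) - x i\<bar>) j \<le> B / 4 * u"
proof (intro allI impI)
  fix j assume j: "j < m"
  define y where "y = u * B / 10"
  have y: "0 \<le> y" "y \<le> 1/40"
    using u B mult_mono[of u "1/4" B 1] by (auto simp: y_def mult.commute)
  have "exp y - 1 \<le> y + y\<^sup>2" using exp_bound[of y] y by simp
  also have "y\<^sup>2 \<le> y * (1/40)" unfolding power2_eq_square using y by (intro mult_left_mono) auto
  finally have exp_y: "exp y - 1 \<le> (41/40) * y" by simp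
  have coord: "\<bar>x i * exp (- (u / 20) * s i) - x i\<bar> \<le> (exp y - 1) * x i" if i: "i < n" for i
  proof -
    define w where "w = - (u / 20) * s i"
    have "(u / 20) * \<bar>s i\<bar> \<le> (u / 20) * (2 * B)"
      using s i u by (intro mult_left_mono) auto
    then have "\<bar>w\<bar> \<le> y"
      using u by (simp add: w_def y_def abs_mult mult_ac)
    then have "\<bar>exp w - 1\<bar> \<le> exp y - 1"
      by (rule abs_exp_minus_one_le)
    then have "x i * \<bar>exp w - 1\<bar> \<le> x i * (exp y - 1)"
      using xnn i by (intro mult_left_mono) auto
    moreover have "\<bar>x i * exp w - x i\<bar> = x i * \<bar>exp w - 1\<bar>"
      using xnn i abs_mult[of "x i" "exp w - 1"] by (simp add: right_diff_distrib)
    ultimately show ?thesis by (simp add: w_def mult.commute)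
  qed
  have "Ax A n (\<lambda>i. \<bar>x i * exp (- (u / 20) * s i) - x i\<bar>) j \<le> (exp y - 1) * Ax A n x j"
    using nonneg j coord by (subst Ax_scale[symmetric]) (intro Ax_mono; auto)
  also have "\<dots> \<le> (41/40) * y * (3/2)"
    using exp_y Axb j y nonneg xnn by (intro mult_mono Ax_nonneg) auto
  also have "\<dots> \<le> B / 4 * u"
    using u B by (simp add: y_def mult_nonneg_nonneg)
  finally show "Ax A n (\<lambda>i. \<bar>x i * exp (- (u / 20) * s i) - x i\<bar>) j \<le> B / 4 * u" .
qed

lemma fmu_alg_step_le:
  fixes A :: "nat \<Rightarrow> nat \<Rightarrow> real" and x :: "nat \<Rightarrow> real" and t :: nat
  assumes nonneg: "\<forall>j<m. \<forall>i<n. 0 \<le> A j i" and xnn: "\<forall>i<n. 0 \<le> x i"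
    and Axb: "\<forall>j<m. Ax A n x j \<le> 1 + eps"
    and eps: "0 < eps" "eps \<le> 1/2"
    and mu: "0 < mu m n eps" "mu m n eps \<le> 1/4"
  shows "fmu A m n eps (\<lambda>i. x i * exp (- alpha m n eps * xi_t A m n eps t x i)) \<le> fmu A m n eps x"
proof -
  define u where "u = mu m n eps"
  define B where "B = eps * 2 ^ t"
  define s where "s = xi_t A m n eps t x"
  define g where "g = gradf A m n eps x"
  define y where "y = (\<lambda>i. x i * exp (- (u / 20) * s i))"
  have y_eq: "(\<lambda>i. x i * exp (- alpha m n eps * xi_t A m n eps t x i)) = y"
    by (simp add: y_def u_def s_def alpha_def)
  have cases: "s i = 0 \<or> (B < \<bar>s i\<bar> \<and> \<bar>s i\<bar> \<le> 2 * B \<and> \<bar>s i\<bar> \<le> 1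
      \<and> 0 < s i * g i \<and> B * (g i + 1) \<le> 4 * \<bar>g i\<bar>)" if "i < n" for i
    unfolding s_def g_def B_def using nonneg that
    by (intro xi_t_cases gradf_ge_minus_one) auto
  show ?thesis
  proof (cases "B < 1")
    case False
    \<comment> \<open>\<open>|\<xi>| \<le> 1\<close>, so the bucket \<open>(B, 2B]\<close> is empty\<close>
    then have "\<forall>i<n. y i = x i" using cases by (force simp: y_def)
    then show ?thesis unfolding y_eq by (rule fmu_cong[THEN eq_refl])
  next
    case True
    have "\<forall>i<n. \<bar>s i\<bar> \<le> 2 * B" using cases eps by (force simp: B_def)
    then have step: "\<forall>j<m. Ax A n (\<lambda>i. \<bar>y i - x i\<bar>) j \<le> B / 4 * u"
      unfolding y_def using nonneg xnn Axb eps mu True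
      by (intro Ax_abs_multiplicative_step_le) (auto simp: u_def B_def)
    have "fmu A m n eps y \<le> fmu A m n eps x
        + (\<Sum>i<n. g i * (y i - x i) + B / 4 * \<bar>y i - x i\<bar> * (g i + 1))"
      using nonneg mu eps True step unfolding g_def
      by (intro fmu_le_linearization) (auto simp: u_def B_def)
    also have "\<dots> \<le> fmu A m n eps x"
    proof -
      have nonpos: "g i * (y i - x i) + B / 4 * \<bar>y i - x i\<bar> * (g i + 1) \<le> 0" if "i < n" for i
        unfolding y_def using xnn that cases[OF that] mu
        by (intro coordinate_descent_term_nonpos) (auto simp: u_def)
      have "(\<Sum>i<n. g i * (y i - x i) + B / 4 * \<bar>y i - x i\<bar> * (g i + 1)) \<le> 0"
        by (rule sum_nonpos) (use nonpos in auto)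
      then show ?thesis by simp
    qed
    finally show ?thesis unfolding y_eq .
  qed
qed

section \<open>Approximate feasibility and optimality\<close>

lemma mu_exp_barrier:
  assumes nm: "1 \<le> n" "1 \<le> m" and eps: "0 < eps" "eps \<le> 1/2" and M: "1 + eps < M"
  shows "real n * M < mu m n eps * exp ((M - 1) / mu m n eps)"
proof -
  define u where "u = mu m n eps"
  define y where "y = real n * real m / eps"
  define L where "L = ln y"
  define s where "s = M - 1 - eps"
  have y: "2 \<le> y" "real n \<le> y" using packing_ratio_bounds(2,3)[OF nm eps] by (simp_all add: y_def)
  have u: "0 < u" "eps / u = 4 * L" using eps_div_mu[OF nm eps] by (simp_all add: u_def L_def y_def)
  have L: "0 < L" "L \<le> y - 1" using y ln_le_minus_one[of y] by (simp_all add: L_def)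
  have s: "0 < s" using M by (simp add: s_def)
  have "(M - 1) / u = eps / u + s / u" by (simp add: s_def flip: add_divide_distrib)
  moreover have "exp (eps / u) = y ^ 4"
    using y exp_of_nat_mult[of 4 L] by (simp add: u L_def)
  ultimately have "exp ((M - 1) / u) = y ^ 4 * exp (s / u)"
    by (simp add: exp_add)
  also have "\<dots> \<ge> y ^ 4 * (1 + s / u)"
    using y by (intro mult_left_mono) auto
  finally have "u * y ^ 4 + y ^ 4 * s \<le> u * exp ((M - 1) / u)"
    using u by (simp add: field_simps mult_left_mono)
  moreover have "real n * s \<le> y ^ 4 * s"
  proof -
    have "y ^ 1 \<le> y ^ 4" using y by (intro power_increasing) auto
    then show ?thesis using y s by (intro mult_right_mono) auto
  qed
  moreover have "real n * (1 + eps) < u * y ^ 4"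
  proof -
    have "6 * (y - 1) < y ^ 3"
    proof -
      have "0 \<le> (y - 2) * (y\<^sup>2 + 2 * y - 2)"
        using y by (intro mult_nonneg_nonneg) (auto simp: add_increasing)
      moreover have "y ^ 3 - 6 * y + 6 = (y - 2) * (y\<^sup>2 + 2 * y - 2) + 2"
        by (simp add: algebra_simps power2_eq_square power3_eq_cube)
      ultimately show ?thesis by (simp add: algebra_simps)
    qed
    then have "3 / 2 < y ^ 3 / (4 * L)" using L by (simp add: field_simps)
    moreover have "u * y ^ 4 = real n * real m * (y ^ 3 / (4 * L))"
      using u eps by (simp add: y_def field_simps eval_nat_numeral)
    moreover have "real n * (1 + eps) \<le> real n * (3 / 2)" using eps by (intro mult_left_mono) auto
    moreover have "real n \<le> real n * real m" using nm mult_left_mono[of 1 "real m" "real n"] by simp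
    then have "real n * (3 / 2) < real n * real m * (y ^ 3 / (4 * L))"
      using nm \<open>3 / 2 < y ^ 3 / (4 * L)\<close> by (intro mult_le_less_imp_less) auto
    ultimately show ?thesis by linarith
  qed
  ultimately show ?thesis by (simp add: u_def s_def algebra_simps)
qed

lemma Ax_le_of_fmu_nonpos:
  fixes A :: "nat \<Rightarrow> nat \<Rightarrow> real" and x :: "nat \<Rightarrow> real"
  assumes nonneg: "\<forall>j<m. \<forall>i<n. 0 \<le> A j i" and col: "\<forall>i<n. \<exists>j<m. 1 \<le> A j i"
    and n: "1 \<le> n" and eps: "0 < eps" "eps \<le> 1/2"
    and xnn: "\<forall>i<n. 0 \<le> x i" and f: "fmu A m n eps x \<le> 0"
  shows "\<forall>j<m. Ax A n x j \<le> 1 + eps"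
proof (rule ccontr)
  assume "\<not> (\<forall>j<m. Ax A n x j \<le> 1 + eps)"
  then obtain j1 where j1: "j1 < m" "1 + eps < Ax A n x j1" by auto
  then have m: "1 \<le> m" by simp
  define M where "M = Max (Ax A n x ` {..<m})"
  have rows: "finite (Ax A n x ` {..<m})" "Ax A n x ` {..<m} \<noteq> {}" using m by (auto simp: lessThan_empty_iff)
  obtain j0 where j0: "j0 < m" "Ax A n x j0 = M" using Max_in[OF rows] M_def by auto
  have le_M: "Ax A n x j \<le> M" if "j < m" for j unfolding M_def using rows that by auto
  have "x i \<le> M" if i: "i < n" for i
  proof -
    obtain j where "j < m" "1 \<le> A j i" using col i by auto
    then show ?thesis using le_Ax_of_entry_ge_one[of n A j x i] nonneg xnn i le_M by force
  qed
  then have "(\<Sum>i<n. x i) \<le> real n * M" using sum_mono[of "{..<n}" x "\<lambda>_. M"] by simp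
  also have "\<dots> < mu m n eps * exp ((M - 1) / mu m n eps)"
    using j1 le_M by (intro mu_exp_barrier n m eps) force
  also have "\<dots> = mu m n eps * pj A m n eps x j0" by (simp add: pj_def j0)
  also have "\<dots> \<le> mu m n eps * (\<Sum>j<m. pj A m n eps x j)"
    using j0 eps_div_mu(2)[OF n m eps] pj_pos
    by (intro mult_left_mono member_le_sum) (auto intro: less_imp_le)
  also have "\<dots> \<le> (\<Sum>i<n. x i)" using f by (simp add: fmu_def)
  finally show False by simp
qed

lemma sum_le_scaled_OPT:
  fixes A :: "nat \<Rightarrow> nat \<Rightarrow> real" and x :: "nat \<Rightarrow> real" and c :: real
  assumes nonneg: "\<forall>j<m. \<forall>i<n. 0 \<le> A j i" and col: "\<forall>i<n. \<exists>j<m. 1 \<le> A j i"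
    and xnn: "\<forall>i<n. 0 \<le> x i" and Axb: "\<forall>j<m. Ax A n x j \<le> c" and c: "0 < c"
  shows "(\<Sum>i<n. x i) \<le> c * OPT A m n"
proof -
  have bdd: "bdd_above {(\<Sum>i<n. w i) | w. feasible A m n w}"
  proof (rule bdd_aboveI)
    fix v assume "v \<in> {(\<Sum>i<n. w i) | w. feasible A m n w}"
    then obtain w where v: "v = (\<Sum>i<n. w i)" and w: "feasible A m n w" by auto
    have "w i \<le> 1" if i: "i < n" for i
    proof -
      obtain j where "j < m" "1 \<le> A j i" using col i by auto
      then show ?thesis using le_Ax_of_entry_ge_one[of n A j w i] nonneg w i
        by (force simp: feasible_def)
    qed
    then show "v \<le> real n" using v sum_mono[of "{..<n}" w "\<lambda>_. 1"] by simp
  qed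
  define z where "z = (\<lambda>i. x i / c)"
  have "Ax A n z j = Ax A n x j / c" for j by (simp add: z_def Ax_def sum_divide_distrib)
  then have "feasible A m n z" using xnn Axb c by (simp add: feasible_def z_def)
  then have "(\<Sum>i<n. z i) \<le> OPT A m n"
    unfolding OPT_def using bdd by (intro cSup_upper) auto
  then show ?thesis using c by (simp add: z_def field_simps flip: sum_divide_distrib)
qed

lemma x_init_nonneg:
  assumes "\<forall>i<n. 1 \<le> colnorm A m i" "eps \<le> 2"
  shows "\<forall>i<n. 0 \<le> x_init A m n eps i"
  using assms by (auto simp: x_init_def intro!: divide_nonneg_pos)

lemma fmu_x_init_nonpos:
  fixes A :: "nat \<Rightarrow> nat \<Rightarrow> real"
  assumes nonneg: "\<forall>j<m. \<forall>i<n. 0 \<le> A j i"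
    and colge: "\<forall>i<n. 1 \<le> colnorm A m i" and i0: "i0 < n" "colnorm A m i0 = 1"
    and nm: "1 \<le> n" "1 \<le> m" and eps: "0 < eps" "eps \<le> 1/2"
  shows "fmu A m n eps (x_init A m n eps) \<le> 0"
proof -
  define u where "u = mu m n eps"
  define y where "y = real n * real m / eps"
  define x0 where "x0 = x_init A m n eps"
  have u: "0 < u" "u \<le> 1/4" using eps_div_mu(2) mu_le_quarter nm eps by (auto simp: u_def)
  have y: "2 * (real n * real m) \<le> y" "2 \<le> y" using packing_ratio_bounds[OF nm eps] by (simp_all add: y_def)
  have n: "0 < real n" using nm by simp
  have x0_nonneg: "\<forall>i<n. 0 \<le> x0 i" using x_init_nonneg colge eps by (simp add: x0_def)
  have pj_le: "pj A m n eps x0 j \<le> 1 / y\<^sup>2" if j: "j < m" for j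
  proof -
    have "A j i * x0 i \<le> (1 - eps/2) / real n" if i: "i < n" for i
    proof -
      have "A j i \<le> colnorm A m i" using abs_le_colnorm[OF j, of A i] by simp
      moreover have "0 < colnorm A m i" using colge i by force
      ultimately have "A j i / colnorm A m i \<le> 1" by simp
      then have "A j i / colnorm A m i * ((1 - eps/2) / real n) \<le> 1 * ((1 - eps/2) / real n)"
        using eps n by (intro mult_right_mono) auto
      then show ?thesis by (simp add: x0_def x_init_def mult.commute)
    qed
    then have "Ax A n x0 j \<le> (\<Sum>i<n. (1 - eps/2) / real n)"
      unfolding Ax_def by (intro sum_mono) auto
    then have "(Ax A n x0 j - 1) / u \<le> (- eps / 2) / u"
      using n u by (intro divide_right_mono) auto
    then have "pj A m n eps x0 j \<le> exp ((- 1/2) * (eps / u))"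
      by (simp add: pj_def u_def)
    also have "\<dots> = y powr (4 * (- 1/2))"
      unfolding u_def y_def by (rule exp_scaled_eps_div_mu[OF nm eps])
    also have "\<dots> = 1 / y\<^sup>2"
      using y by (simp add: powr_minus_divide powr_numeral)
    finally show ?thesis .
  qed
  have "mu m n eps * (\<Sum>j<m. pj A m n eps x0 j) \<le> (1/4) * (real m / y\<^sup>2)"
    using pj_le u sum_mono[of "{..<m}" "pj A m n eps x0" "\<lambda>_. 1 / y\<^sup>2"]
    by (intro mult_mono) (auto simp: u_def intro: sum_nonneg less_imp_le[OF pj_pos])
  also have "\<dots> \<le> (1 - eps/2) / real n"
  proof -
    have "1 * 1 \<le> real n * real m" using nm by (intro mult_mono) auto
    then have "4 * (real n * real m) * 1 \<le> 4 * (real n * real m) * (real n * real m)"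
      by (intro mult_left_mono) auto
    then have "real m * (4 * real n) \<le> (2 * (real n * real m))\<^sup>2"
      by (simp add: power2_eq_square mult_ac)
    also have "\<dots> \<le> y\<^sup>2" using y by (intro power_mono) auto
    finally have "real m / y\<^sup>2 \<le> 1 / (4 * real n)" using n y by (simp add: field_simps)
    then have "(1/4) * (real m / y\<^sup>2) \<le> (1/4) * (1 / (4 * real n))" by simp
    also have "\<dots> \<le> (1 - eps/2) / real n" using n eps by (simp add: field_simps)
    finally show ?thesis .
  qed
  also have "\<dots> = x0 i0" using i0 by (simp add: x0_def x_init_def)
  also have "\<dots> \<le> (\<Sum>i<n. x0 i)" using i0 x0_nonneg by (intro member_le_sum) auto
  finally show ?thesis by (simp add: fmu_def x0_def)
qed

lemma alg_iter_nonneg_fmu_nonpos: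
  fixes A :: "nat \<Rightarrow> nat \<Rightarrow> real"
  assumes nonneg: "\<forall>j<m. \<forall>i<n. 0 \<le> A j i" and col: "\<forall>i<n. \<exists>j<m. 1 \<le> A j i"
    and colge: "\<forall>i<n. 1 \<le> colnorm A m i" and i0: "i0 < n" "colnorm A m i0 = 1"
    and nm: "1 \<le> n" "1 \<le> m" and eps: "0 < eps" "eps \<le> 1/2"
  shows "(\<forall>i<n. 0 \<le> alg_iter A m n eps ts k i) \<and> fmu A m n eps (alg_iter A m n eps ts k) \<le> 0"
proof (induction k)
  case 0
  show ?case
    using fmu_x_init_nonpos[OF nonneg colge i0 nm eps] x_init_nonneg[OF colge] eps by simp
next
  case (Suc k)
  let ?x = "alg_iter A m n eps ts k"
  have "\<forall>j<m. Ax A n ?x j \<le> 1 + eps"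
    using Ax_le_of_fmu_nonpos[OF nonneg col nm(1) eps] Suc.IH by blast
  then have "fmu A m n eps (alg_iter A m n eps ts (Suc k)) \<le> fmu A m n eps ?x"
    using fmu_alg_step_le[OF nonneg _ _ eps eps_div_mu(2)[OF nm eps] mu_le_quarter[OF nm eps]] Suc.IH
    by (simp add: Let_def)
  then show ?case using Suc.IH by (simp add: Let_def)
qed

theorem claim3p5:
  fixes A :: "nat \<Rightarrow> nat \<Rightarrow> real" and m n T :: nat and eps :: real
    and ts :: "nat \<Rightarrow> nat"
  assumes nonneg: "\<forall>j<m. \<forall>i<n. 0 \<le> A j i"
    and nozero: "\<forall>i<n. \<exists>j<m. A j i \<noteq> 0"
    and normalized: "n \<ge> 1" "Min {colnorm A m i | i. i < n} = 1"
    and eps: "0 < eps" "eps \<le> 1/2"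
    and choices: "\<forall>k<T. ts k < wbuckets eps"
  shows "(\<forall>k<T. fmu A m n eps (alg_iter A m n eps ts (Suc k)) \<le> fmu A m n eps (alg_iter A m n eps ts k))
       \<and> (\<forall>k\<le>T. fmu A m n eps (alg_iter A m n eps ts k) \<le> 0
              \<and> (\<forall>j<m. Ax A n (alg_iter A m n eps ts k) j \<le> 1 + eps)
              \<and> (\<Sum>i<n. alg_iter A m n eps ts k i) \<le> (1 + eps) * OPT A m n)"
proof -
  \<comment> \<open>every step is a descent step whatever bucket is chosen\<close>
  let ?x = "alg_iter A m n eps ts"
  have nm: "1 \<le> n" "1 \<le> m" using nozero normalized(1) by fastforce+
  have colge: "\<forall>i<n. 1 \<le> colnorm A m i" and "\<exists>i0<n. colnorm A m i0 = 1"
    using Min_colnorm_eq_oneD[OF normalized] by auto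
  then obtain i0 where i0: "i0 < n" "colnorm A m i0 = 1" by blast
  have col: "\<forall>i<n. \<exists>j<m. 1 \<le> A j i"
    using nonneg nm(2) colge by (auto intro: entry_ge_one_of_colnorm)
  have inv: "(\<forall>i<n. 0 \<le> ?x k i) \<and> fmu A m n eps (?x k) \<le> 0" for k
    by (rule alg_iter_nonneg_fmu_nonpos[OF nonneg col colge i0 nm eps])
  have Axb: "\<forall>j<m. Ax A n (?x k) j \<le> 1 + eps" for k
    using Ax_le_of_fmu_nonpos[OF nonneg col nm(1) eps] inv by blast
  have "fmu A m n eps (?x (Suc k)) \<le> fmu A m n eps (?x k)" for k
    using fmu_alg_step_le[OF nonneg _ Axb eps eps_div_mu(2)[OF nm eps] mu_le_quarter[OF nm eps]] inv
    by (simp add: Let_def)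
  moreover have "(\<Sum>i<n. ?x k i) \<le> (1 + eps) * OPT A m n" for k
    using sum_le_scaled_OPT[OF nonneg col _ Axb] inv eps by auto
  ultimately show ?thesis using inv Axb by blast
qed

end
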